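(* Let $M_1,\dots,M_k$ be terms in normal form and let $C$ be a $k$-hole $E$-context. If $\Gamma,\downarrow C[M_1,\dots,M_k]\vdash M$ has a cut-free derivation in $\mathcal S$, then so does $\Gamma,M_1,\dots,M_k\vdash M$.
   Context: Fix names, variables and constructors $\mathsf{pub}$ (unary), $\mathsf{sign},\mathsf{blind},\langle\cdot,\cdot\rangle,\{\cdot\}_\cdot$ (binary). $E$ is the union of AC-convergent equational theories $E_1,\dots,E_n$ with pairwise disjoint signatures, disjoint from the constructors, each with at most one associative-commutative (AC) binary symbol $\oplus_i$; $E$ is presented by a rewrite system $R_E$ terminating and confluent modulo AC; $\Sigma_E$ is its signature. Terms are ground terms over names, the constructors and $\Sigma_E$; $\downarrow N$ is the $R_E$-normal form of $N$ modulo AC. $\equiv$ is equality modulo AC of all $\oplus_i$; $\approx_E$ equality modulo $E$. Guarded term: a name, a variable, or headed by a constructor. $E$-context: term with holes built only from symbols of $\Sigma_E$; $C[M_1,\dots,M_k]$ places $M_i$ in the $i$-th hole. Sequents $\Gamma\vdash M$ have all terms in normal form; $\Gamma,M$ means $\Gamma\cup\{M\}$. A derivation is cut-free if it has no instance of (cut). System $\mathcal S$: (id) $\Gamma\vdash M$ with no premise if $M\approx_E C[M_1,\dots,M_k]$ for an $E$-context $C$ and $M_i\in\Gamma$; (cut) from $\Gamma\vdash M$, $\Gamma,M\vdash T$ infer $\Gamma\vdash T$; ($p_L$) from $\Gamma,\langle M,N\rangle,M,N\vdash T$ infer $\Gamma,\langle M,N\rangle\vdash T$; ($p_R$) from $\Gamma\vdash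 M,\Gamma\vdash N$ infer $\Gamma\vdash\langle M,N\rangle$; ($e_L$) from $\Gamma,\{M\}_K\vdash K$ and $\Gamma,\{M\}_K,M,K\vdash N$ infer $\Gamma,\{M\}_K\vdash N$; ($e_R$) from $\Gamma\vdash M,\Gamma\vdash K$ infer $\Gamma\vdash\{M\}_K$; ($\mathsf{sign}_L$) from $\Gamma,\mathsf{sign}(M,K),\mathsf{pub}(L),M\vdash N$ infer $\Gamma,\mathsf{sign}(M,K),\mathsf{pub}(L)\vdash N$ if $K\equiv L$; ($\mathsf{sign}_R$) from $\Gamma\vdash M,\Gamma\vdash K$ infer $\Gamma\vdash\mathsf{sign}(M,K)$; ($\mathsf{blind}_{L1}$) from $\Gamma,\mathsf{blind}(M,K)\vdash K$ and $\Gamma,\mathsf{blind}(M,K),M,K\vdash N$ infer $\Gamma,\mathsf{blind}(M,K)\vdash N$; ($\mathsf{blind}_R$) from $\Gamma\vdash M,\Gamma\vdash K$ infer $\Gamma\vdash\mathsf{blind}(M,K)$; ($\mathsf{blind}_{L2}$) from $\Gamma,\mathsf{sign}(\mathsf{blind}(M,R),K)\vdash R$ and $\Gamma,\mathsf{sign}(\mathsf{blind}(M,R),K),\mathsf{sign}(M,K),R\vdash N$ infer $\Gamma,\mathsf{sign}(\mathsf{blind}(M,R),K)\vdash N$; ($gs$) from $\Gamma\vdash A$, $\Gamma,A\vdash M$ infer $\Gamma\vdash M$ if $A$ is a guarded subterm of a term in $\Gamma\cup\{M\}$. *)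

theory Defs
  imports Main
begin

text \<open>Names 'n, symbols of the signature Sigma_E of type 'f.  Var is used only for
  variables of rewrite rules and for holes of E-contexts; the terms of sequents are
  ground (contain no Var).  Enc m k stands for the encryption {m}_k,
  Pair for the pairing constructor, Fn f ts for f(ts) with f in Sigma_E.\<close>

datatype ('n, 'f) trm =
    Nm 'n
  | Var nat
  | Pub "('n, 'f) trm"
  | Sign "('n, 'f) trm" "('n, 'f) trm"
  | Blind "('n, 'f) trm" "('n, 'f) trm"
  | Pair "('n, 'f) trm" "('n, 'f) trm"
  | Enc "('n, 'f) trm" "('n, 'f) trm"
  | Fn 'f "('n, 'f) trm list"

fun vars :: "('n, 'f) trm \<Rightarrow> nat set" where
  "vars (Nm a) = {}"
| "vars (Var x) = {x}"
| "vars (Pub t) = vars t"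
| "vars (Sign s t) = vars s \<union> vars t"
| "vars (Blind s t) = vars s \<union> vars t"
| "vars (Pair s t) = vars s \<union> vars t"
| "vars (Enc s t) = vars s \<union> vars t"
| "vars (Fn f ts) = (\<Union>t\<in>set ts. vars t)"

fun syms :: "('n, 'f) trm \<Rightarrow> 'f set" where
  "syms (Nm a) = {}"
| "syms (Var x) = {}"
| "syms (Pub t) = syms t"
| "syms (Sign s t) = syms s \<union> syms t"
| "syms (Blind s t) = syms s \<union> syms t"
| "syms (Pair s t) = syms s \<union> syms t"
| "syms (Enc s t) = syms s \<union> syms t"
| "syms (Fn f ts) = insert f (\<Union>t\<in>set ts. syms t)"

fun holes :: "('n, 'f) trm \<Rightarrow> nat list" where
  "holes (Nm a) = []"
| "holes (Var x) = [x]"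
| "holes (Pub t) = holes t"
| "holes (Sign s t) = holes s @ holes t"
| "holes (Blind s t) = holes s @ holes t"
| "holes (Pair s t) = holes s @ holes t"
| "holes (Enc s t) = holes s @ holes t"
| "holes (Fn f ts) = concat (map holes ts)"

definition ground :: "('n, 'f) trm \<Rightarrow> bool" where
  "ground t \<longleftrightarrow> vars t = {}"

fun is_eterm :: "('n, 'f) trm \<Rightarrow> bool" where
  "is_eterm (Var x) = True"
| "is_eterm (Fn f ts) = (\<forall>t\<in>set ts. is_eterm t)"
| "is_eterm _ = False"

fun wf_trm :: "('f \<Rightarrow> nat) \<Rightarrow> ('n, 'f) trm \<Rightarrow> bool" where
  "wf_trm ar (Nm a) = True"
| "wf_trm ar (Var x) = True"
| "wf_trm ar (Pub t) = wf_trm ar t"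
| "wf_trm ar (Sign s t) = (wf_trm ar s \<and> wf_trm ar t)"
| "wf_trm ar (Blind s t) = (wf_trm ar s \<and> wf_trm ar t)"
| "wf_trm ar (Pair s t) = (wf_trm ar s \<and> wf_trm ar t)"
| "wf_trm ar (Enc s t) = (wf_trm ar s \<and> wf_trm ar t)"
| "wf_trm ar (Fn f ts) = (length ts = ar f \<and> (\<forall>t\<in>set ts. wf_trm ar t))"

fun subst :: "(nat \<Rightarrow> ('n, 'f) trm) \<Rightarrow> ('n, 'f) trm \<Rightarrow> ('n, 'f) trm" where
  "subst \<sigma> (Nm a) = Nm a"
| "subst \<sigma> (Var x) = \<sigma> x"
| "subst \<sigma> (Pub t) = Pub (subst \<sigma> t)"
| "subst \<sigma> (Sign s t) = Sign (subst \<sigma> s) (subst \<sigma> t)"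
| "subst \<sigma> (Blind s t) = Blind (subst \<sigma> s) (subst \<sigma> t)"
| "subst \<sigma> (Pair s t) = Pair (subst \<sigma> s) (subst \<sigma> t)"
| "subst \<sigma> (Enc s t) = Enc (subst \<sigma> s) (subst \<sigma> t)"
| "subst \<sigma> (Fn f ts) = Fn f (map (subst \<sigma>) ts)"

fun subterms :: "('n, 'f) trm \<Rightarrow> ('n, 'f) trm set" where
  "subterms (Nm a) = {Nm a}"
| "subterms (Var x) = {Var x}"
| "subterms (Pub t) = insert (Pub t) (subterms t)"
| "subterms (Sign s t) = insert (Sign s t) (subterms s \<union> subterms t)"
| "subterms (Blind s t) = insert (Blind s t) (subterms s \<union> subterms t)"
| "subterms (Pair s t) = insert (Pair s t) (subterms s \<union> subterms t)"
| "subterms (Enc s t) = insert (Enc s t) (subterms s \<union> subterms t)"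
| "subterms (Fn f ts) = insert (Fn f ts) (\<Union>t\<in>set ts. subterms t)"

fun guarded :: "('n, 'f) trm \<Rightarrow> bool" where
  "guarded (Fn f ts) = False"
| "guarded _ = True"

inductive ac_eq :: "'f set \<Rightarrow> ('n, 'f) trm \<Rightarrow> ('n, 'f) trm \<Rightarrow> bool" for A where
  ac_refl: "ac_eq A t t"
| ac_sym: "ac_eq A s t \<Longrightarrow> ac_eq A t s"
| ac_trans: "ac_eq A s t \<Longrightarrow> ac_eq A t u \<Longrightarrow> ac_eq A s u"
| ac_assoc: "f \<in> A \<Longrightarrow> ac_eq A (Fn f [Fn f [a, b], c]) (Fn f [a, Fn f [b, c]])"
| ac_comm: "f \<in> A \<Longrightarrow> ac_eq A (Fn f [a, b]) (Fn f [b, a])"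
| ac_Pub: "ac_eq A s t \<Longrightarrow> ac_eq A (Pub s) (Pub t)"
| ac_Sign1: "ac_eq A s t \<Longrightarrow> ac_eq A (Sign s u) (Sign t u)"
| ac_Sign2: "ac_eq A s t \<Longrightarrow> ac_eq A (Sign u s) (Sign u t)"
| ac_Blind1: "ac_eq A s t \<Longrightarrow> ac_eq A (Blind s u) (Blind t u)"
| ac_Blind2: "ac_eq A s t \<Longrightarrow> ac_eq A (Blind u s) (Blind u t)"
| ac_Pair1: "ac_eq A s t \<Longrightarrow> ac_eq A (Pair s u) (Pair t u)"
| ac_Pair2: "ac_eq A s t \<Longrightarrow> ac_eq A (Pair u s) (Pair u t)"
| ac_Enc1: "ac_eq A s t \<Longrightarrow> ac_eq A (Enc s u) (Enc t u)"
| ac_Enc2: "ac_eq A s t \<Longrightarrow> ac_eq A (Enc u s) (Enc u t)"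
| ac_Fn: "ac_eq A s t \<Longrightarrow> ac_eq A (Fn f (xs @ s # ys)) (Fn f (xs @ t # ys))"

type_synonym ('n, 'f) rule = "('n, 'f) trm \<times> ('n, 'f) trm"

inductive rstep :: "('n, 'f) rule set \<Rightarrow> ('n, 'f) trm \<Rightarrow> ('n, 'f) trm \<Rightarrow> bool" for R where
  rs_root: "(l, r) \<in> R \<Longrightarrow> rstep R (subst \<sigma> l) (subst \<sigma> r)"
| rs_Pub: "rstep R s t \<Longrightarrow> rstep R (Pub s) (Pub t)"
| rs_Sign1: "rstep R s t \<Longrightarrow> rstep R (Sign s u) (Sign t u)"
| rs_Sign2: "rstep R s t \<Longrightarrow> rstep R (Sign u s) (Sign u t)"
| rs_Blind1: "rstep R s t \<Longrightarrow> rstep R (Blind s u) (Blind t u)"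
| rs_Blind2: "rstep R s t \<Longrightarrow> rstep R (Blind u s) (Blind u t)"
| rs_Pair1: "rstep R s t \<Longrightarrow> rstep R (Pair s u) (Pair t u)"
| rs_Pair2: "rstep R s t \<Longrightarrow> rstep R (Pair u s) (Pair u t)"
| rs_Enc1: "rstep R s t \<Longrightarrow> rstep R (Enc s u) (Enc t u)"
| rs_Enc2: "rstep R s t \<Longrightarrow> rstep R (Enc u s) (Enc u t)"
| rs_Fn: "rstep R s t \<Longrightarrow> rstep R (Fn f (xs @ s # ys)) (Fn f (xs @ t # ys))"

definition rstep_ac :: "'f set \<Rightarrow> ('n, 'f) rule set \<Rightarrow> ('n, 'f) trm \<Rightarrow> ('n, 'f) trm \<Rightarrow> bool" where
  "rstep_ac A R s t \<longleftrightarrow> (\<exists>s' t'. ac_eq A s s' \<and> rstep R s' t' \<and> ac_eq A t' t)"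

definition conv_ac :: "'f set \<Rightarrow> ('n, 'f) rule set \<Rightarrow> ('n, 'f) trm \<Rightarrow> ('n, 'f) trm \<Rightarrow> bool" where
  "conv_ac A R = (\<lambda>s t. rstep_ac A R s t \<or> rstep_ac A R t s \<or> ac_eq A s t)\<^sup>*\<^sup>*"

definition terminating_ac :: "('f \<Rightarrow> nat) \<Rightarrow> 'f set \<Rightarrow> ('n, 'f) rule set \<Rightarrow> bool" where
  "terminating_ac ar A R \<longleftrightarrow>
     \<not> (\<exists>g :: nat \<Rightarrow> ('n, 'f) trm. \<forall>i. ground (g i) \<and> wf_trm ar (g i) \<and> rstep_ac A R (g i) (g (Suc i)))"

definition confluent_ac :: "('f \<Rightarrow> nat) \<Rightarrow> 'f set \<Rightarrow> ('n, 'f) rule set \<Rightarrow> bool" where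
  "confluent_ac ar A R \<longleftrightarrow>
     (\<forall>s t. ground s \<and> wf_trm ar s \<and> ground t \<and> wf_trm ar t \<and> conv_ac A R s t \<longrightarrow>
        (\<exists>u v. (rstep_ac A R)\<^sup>*\<^sup>* s u \<and> (rstep_ac A R)\<^sup>*\<^sup>* t v \<and> ac_eq A u v))"

text \<open>E = E_0 \<union> ... \<union> E_(nthy-1): thy f is the index of the theory whose signature contains f
  (so the signatures are pairwise disjoint); ACs is the set of AC symbols; rules is R_E,
  and the rules of E_i are those whose symbols all lie in the signature of E_i.\<close>
record ('n, 'f) eqthy =
  ACs :: "'f set"
  arity :: "'f \<Rightarrow> nat"
  thy :: "'f \<Rightarrow> nat"
  nthy :: nat
  rules :: "('n, 'f) rule set"

definition rules_of :: "('n, 'f) eqthy \<Rightarrow> nat \<Rightarrow> ('n, 'f) rule set" where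
  "rules_of T i = {(l, r) \<in> rules T. \<forall>f \<in> syms l \<union> syms r. thy T f = i}"

definition E_ok :: "('n, 'f) eqthy \<Rightarrow> bool" where
  "E_ok T \<longleftrightarrow>
     (\<forall>f. thy T f < nthy T) \<and>
     (\<forall>f \<in> ACs T. arity T f = 2) \<and>
     (\<forall>f \<in> ACs T. \<forall>g \<in> ACs T. thy T f = thy T g \<longrightarrow> f = g) \<and>
     (\<forall>(l, r) \<in> rules T. is_eterm l \<and> is_eterm r \<and> wf_trm (arity T) l \<and> wf_trm (arity T) r \<and>
         (\<forall>x. l \<noteq> Var x) \<and> vars r \<subseteq> vars l \<and>
         (\<exists>i. \<forall>f \<in> syms l \<union> syms r. thy T f = i)) \<and>
     (\<forall>i < nthy T. terminating_ac (arity T) (ACs T) (rules_of T i) \<and>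
                    confluent_ac (arity T) (ACs T) (rules_of T i)) \<and>
     terminating_ac (arity T) (ACs T) (rules T) \<and> confluent_ac (arity T) (ACs T) (rules T)"

definition eqE :: "('n, 'f) eqthy \<Rightarrow> ('n, 'f) trm \<Rightarrow> ('n, 'f) trm \<Rightarrow> bool" where
  "eqE T = conv_ac (ACs T) (rules T)"

definition acE :: "('n, 'f) eqthy \<Rightarrow> ('n, 'f) trm \<Rightarrow> ('n, 'f) trm \<Rightarrow> bool" where
  "acE T = ac_eq (ACs T)"

definition is_nf :: "('n, 'f) eqthy \<Rightarrow> ('n, 'f) trm \<Rightarrow> bool" where
  "is_nf T t \<longleftrightarrow> \<not> (\<exists>u. rstep_ac (ACs T) (rules T) t u)"

text \<open>N is (a representative of) the normal form \<down>t.\<close>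
definition is_nf_of :: "('n, 'f) eqthy \<Rightarrow> ('n, 'f) trm \<Rightarrow> ('n, 'f) trm \<Rightarrow> bool" where
  "is_nf_of T t N \<longleftrightarrow> (rstep_ac (ACs T) (rules T))\<^sup>*\<^sup>* t N \<and> is_nf T N"

text \<open>A term of the sequent calculus: ground, arity-respecting, in normal form.\<close>
definition nterm :: "('n, 'f) eqthy \<Rightarrow> ('n, 'f) trm \<Rightarrow> bool" where
  "nterm T t \<longleftrightarrow> ground t \<and> wf_trm (arity T) t \<and> is_nf T t"

definition nseq :: "('n, 'f) eqthy \<Rightarrow> ('n, 'f) trm set \<Rightarrow> ('n, 'f) trm \<Rightarrow> bool" where
  "nseq T \<Gamma> M \<longleftrightarrow> (\<forall>N \<in> insert M \<Gamma>. nterm T N)"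

definition ectx :: "('n, 'f) eqthy \<Rightarrow> nat \<Rightarrow> ('n, 'f) trm \<Rightarrow> bool" where
  "ectx T k C \<longleftrightarrow> is_eterm C \<and> wf_trm (arity T) C \<and> holes C = [0..<k]"

text \<open>C[M_1,...,M_k] (with Ms = [M_1,...,M_k]).\<close>
definition plug :: "('n, 'f) trm \<Rightarrow> ('n, 'f) trm list \<Rightarrow> ('n, 'f) trm" where
  "plug C Ms = subst (\<lambda>i. Ms ! i) C"

section \<open>Cut-free derivability in system S (all rules except cut)\<close>

inductive cfree :: "('n, 'f) eqthy \<Rightarrow> ('n, 'f) trm set \<Rightarrow> ('n, 'f) trm \<Rightarrow> bool" for T where
  r_id: "\<lbrakk> nseq T \<Gamma> M; ectx T k C; length Ms = k; set Ms \<subseteq> \<Gamma>; eqE T M (plug C Ms) \<rbrakk>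
     \<Longrightarrow> cfree T \<Gamma> M"
| r_pL: "\<lbrakk> nseq T (insert (Pair M N) \<Gamma>) U;
          cfree T (insert (Pair M N) \<Gamma> \<union> {M, N}) U \<rbrakk>
     \<Longrightarrow> cfree T (insert (Pair M N) \<Gamma>) U"
| r_pR: "\<lbrakk> nseq T \<Gamma> (Pair M N); cfree T \<Gamma> M; cfree T \<Gamma> N \<rbrakk> \<Longrightarrow> cfree T \<Gamma> (Pair M N)"
| r_eL: "\<lbrakk> nseq T (insert (Enc M K) \<Gamma>) N;
          cfree T (insert (Enc M K) \<Gamma>) K;
          cfree T (insert (Enc M K) \<Gamma> \<union> {M, K}) N \<rbrakk>
     \<Longrightarrow> cfree T (insert (Enc M K) \<Gamma>) N"
| r_eR: "\<lbrakk> nseq T \<Gamma> (Enc M K); cfree T \<Gamma> M; cfree T \<Gamma> K \<rbrakk> \<Longrightarrow> cfree T \<Gamma> (Enc M K)"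
| r_signL: "\<lbrakk> nseq T (\<Gamma> \<union> {Sign M K, Pub L}) N; acE T K L;
          cfree T (\<Gamma> \<union> {Sign M K, Pub L, M}) N \<rbrakk>
     \<Longrightarrow> cfree T (\<Gamma> \<union> {Sign M K, Pub L}) N"
| r_signR: "\<lbrakk> nseq T \<Gamma> (Sign M K); cfree T \<Gamma> M; cfree T \<Gamma> K \<rbrakk> \<Longrightarrow> cfree T \<Gamma> (Sign M K)"
| r_blindL1: "\<lbrakk> nseq T (insert (Blind M K) \<Gamma>) N;
          cfree T (insert (Blind M K) \<Gamma>) K;
          cfree T (insert (Blind M K) \<Gamma> \<union> {M, K}) N \<rbrakk>
     \<Longrightarrow> cfree T (insert (Blind M K) \<Gamma>) N"
| r_blindR: "\<lbrakk> nseq T \<Gamma> (Blind M K); cfree T \<Gamma> M; cfree T \<Gamma> K \<rbrakk> \<Longrightarrow> cfree T \<Gamma> (Blind M K)"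
| r_blindL2: "\<lbrakk> nseq T (insert (Sign (Blind M R) K) \<Gamma>) N;
          cfree T (insert (Sign (Blind M R) K) \<Gamma>) R;
          cfree T (insert (Sign (Blind M R) K) \<Gamma> \<union> {Sign M K, R}) N \<rbrakk>
     \<Longrightarrow> cfree T (insert (Sign (Blind M R) K) \<Gamma>) N"
| r_gs: "\<lbrakk> nseq T \<Gamma> M; guarded A; A \<in> (\<Union>N \<in> insert M \<Gamma>. subterms N);
          cfree T \<Gamma> A; cfree T (insert A \<Gamma>) M \<rbrakk>
     \<Longrightarrow> cfree T \<Gamma> M"

end

theory Submission
  imports Defs "HOL-Library.Nat_Bijection"
begin

text \<open>A cut-free derivation from hypotheses \<Delta> can be replayed from any \<Gamma> from which every
  D \<in> \<Delta> is available: D is E-equal to an E-context filled with members of \<Gamma>, and every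
  guarded subterm of D is AC-equal to a subterm of a member of \<Gamma>.  Instances of (id) are
  replayed by composing E-contexts.  A left rule decomposing a (guarded) hypothesis D is
  replayed by first adding, with (gs), the AC-variant of D that occurs as a subterm in \<Gamma>;
  the left premise of that (gs) is an instance of (id).  Because what gets decomposed is
  only an AC-variant of D, the premises, and hence all goals, are replayed up to AC.

  Normalising C[M_1,...,M_k] creates no new guarded subterms: the rules are E-terms, so a
  rewrite step only rearranges the maximal guarded subterms (aliens), and those of the
  normal forms M_i cannot be rewritten.  Hence \<down>C[M_1,...,M_k] is available from M_1,...,M_k.\<close>

lemma ac_guarded: "ac_eq A s t \<Longrightarrow> guarded s = guarded t"
  by (induction rule: ac_eq.induct) auto

lemma ac_vars: "ac_eq A s t \<Longrightarrow> vars s = vars t"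
  by (induction rule: ac_eq.induct) auto

lemma ac_wf_trm: "ac_eq A s t \<Longrightarrow> \<forall>f\<in>A. ar f = 2 \<Longrightarrow> wf_trm ar s = wf_trm ar t"
  by (induction rule: ac_eq.induct) auto

fun same_head_ac :: "'f set \<Rightarrow> ('n, 'f) trm \<Rightarrow> ('n, 'f) trm \<Rightarrow> bool" where
  "same_head_ac A (Nm a) t = (t = Nm a)"
| "same_head_ac A (Var x) t = (t = Var x)"
| "same_head_ac A (Pub a) t = (\<exists>a'. t = Pub a' \<and> ac_eq A a a')"
| "same_head_ac A (Sign a b) t = (\<exists>a' b'. t = Sign a' b' \<and> ac_eq A a a' \<and> ac_eq A b b')"
| "same_head_ac A (Blind a b) t = (\<exists>a' b'. t = Blind a' b' \<and> ac_eq A a a' \<and> ac_eq A b b')"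
| "same_head_ac A (Pair a b) t = (\<exists>a' b'. t = Pair a' b' \<and> ac_eq A a a' \<and> ac_eq A b b')"
| "same_head_ac A (Enc a b) t = (\<exists>a' b'. t = Enc a' b' \<and> ac_eq A a a' \<and> ac_eq A b b')"
| "same_head_ac A (Fn f ts) t = (\<exists>g us. t = Fn g us)"

lemma same_head_ac_refl: "same_head_ac A t t"
  by (cases t) (auto intro: ac_refl)

lemma same_head_ac_sym: "same_head_ac A s t \<Longrightarrow> same_head_ac A t s"
  by (cases s) (auto intro: ac_sym)

lemma same_head_ac_trans: "same_head_ac A s t \<Longrightarrow> same_head_ac A t u \<Longrightarrow> same_head_ac A s u"
  by (cases s) (auto, (blast intro: ac_eq.ac_trans)+)

lemma ac_same_head: "ac_eq A s t \<Longrightarrow> same_head_ac A s t"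
proof (induction rule: ac_eq.induct)
  case (ac_refl t) then show ?case by (rule same_head_ac_refl)
next
  case (ac_sym s t) then show ?case by (blast intro: same_head_ac_sym)
next
  case (ac_trans s t u) then show ?case by (blast intro: same_head_ac_trans)
qed (auto intro: ac_eq.ac_refl)

lemma acE_refl: "acE T a a"
  unfolding acE_def by (rule ac_eq.ac_refl)

lemma acE_sym: "acE T a b \<Longrightarrow> acE T b a"
  unfolding acE_def by (rule ac_eq.ac_sym)

lemma acE_trans: "acE T a b \<Longrightarrow> acE T b c \<Longrightarrow> acE T a c"
  unfolding acE_def by (rule ac_eq.ac_trans)

lemma acE_PairD: "acE T (Pair a b) t \<Longrightarrow> \<exists>a' b'. t = Pair a' b' \<and> acE T a a' \<and> acE T b b'"
  unfolding acE_def using ac_same_head by fastforce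

lemma acE_EncD: "acE T (Enc a b) t \<Longrightarrow> \<exists>a' b'. t = Enc a' b' \<and> acE T a a' \<and> acE T b b'"
  unfolding acE_def using ac_same_head by fastforce

lemma acE_SignD: "acE T (Sign a b) t \<Longrightarrow> \<exists>a' b'. t = Sign a' b' \<and> acE T a a' \<and> acE T b b'"
  unfolding acE_def using ac_same_head by fastforce

lemma acE_BlindD: "acE T (Blind a b) t \<Longrightarrow> \<exists>a' b'. t = Blind a' b' \<and> acE T a a' \<and> acE T b b'"
  unfolding acE_def using ac_same_head by fastforce

lemma acE_PubD: "acE T (Pub a) t \<Longrightarrow> \<exists>a'. t = Pub a' \<and> acE T a a'"
  unfolding acE_def using ac_same_head by fastforce

lemma subterms_refl: "t \<in> subterms t"
  by (cases t) auto

lemma subterms_trans: "a \<in> subterms b \<Longrightarrow> b \<in> subterms c \<Longrightarrow> a \<in> subterms c"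
  by (induction c arbitrary: b) (auto simp: subterms_refl)

lemma ac_guarded_subterms:
  "ac_eq A s t \<Longrightarrow>
   (\<forall>a\<in>subterms s. guarded a \<longrightarrow> (\<exists>b\<in>subterms t. ac_eq A a b)) \<and>
   (\<forall>b\<in>subterms t. guarded b \<longrightarrow> (\<exists>a\<in>subterms s. ac_eq A b a))"
proof (induction rule: ac_eq.induct)
  case (ac_trans s t u)
  have "\<exists>c\<in>subterms w. ac_eq A a c"
    if "\<forall>a\<in>subterms v. guarded a \<longrightarrow> (\<exists>b\<in>subterms t. ac_eq A a b)"
      and "\<forall>b\<in>subterms t. guarded b \<longrightarrow> (\<exists>c\<in>subterms w. ac_eq A b c)"
      and "a \<in> subterms v" "guarded a" for v w a
    using that ac_guarded by (meson ac_eq.ac_trans)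
  with ac_trans.IH show ?case by blast
qed (auto intro: ac_eq.intros)

lemma ac_guarded_subterm:
  "ac_eq A s t \<Longrightarrow> a \<in> subterms s \<Longrightarrow> guarded a \<Longrightarrow> \<exists>b\<in>subterms t. ac_eq A a b"
  using ac_guarded_subterms by blast

lemma conv_ac_refl: "conv_ac A R s s"
  unfolding conv_ac_def by simp

lemma conv_ac_trans: "conv_ac A R s t \<Longrightarrow> conv_ac A R t u \<Longrightarrow> conv_ac A R s u"
  unfolding conv_ac_def by (rule rtranclp_trans)

lemma conv_ac_sym: "conv_ac A R s t \<Longrightarrow> conv_ac A R t s"
  unfolding conv_ac_def
proof (induction rule: rtranclp_induct)
  case (step y z)
  have "(\<lambda>s t. rstep_ac A R s t \<or> rstep_ac A R t s \<or> ac_eq A s t) z y"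
    using step(2) by (auto intro: ac_eq.ac_sym)
  then show ?case using step(3) by (rule converse_rtranclp_into_rtranclp)
qed simp

lemma conv_ac_of_ac: "ac_eq A s t \<Longrightarrow> conv_ac A R s t"
  unfolding conv_ac_def by auto

lemma conv_ac_of_rsteps: "(rstep_ac A R)\<^sup>*\<^sup>* s t \<Longrightarrow> conv_ac A R s t"
  unfolding conv_ac_def by (erule mono_rtranclp[rule_format, rotated]) simp

lemma rstep_ac_Fn: "rstep_ac A R s t \<Longrightarrow> rstep_ac A R (Fn f (xs @ s # ys)) (Fn f (xs @ t # ys))"
  unfolding rstep_ac_def by (blast intro: ac_eq.ac_Fn rstep.rs_Fn)

lemma conv_ac_Fn: "conv_ac A R s t \<Longrightarrow> conv_ac A R (Fn f (xs @ s # ys)) (Fn f (xs @ t # ys))"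
  unfolding conv_ac_def
proof (induction rule: rtranclp_induct)
  case (step y z)
  then have "rstep_ac A R (Fn f (xs @ y # ys)) (Fn f (xs @ z # ys))
      \<or> rstep_ac A R (Fn f (xs @ z # ys)) (Fn f (xs @ y # ys))
      \<or> ac_eq A (Fn f (xs @ y # ys)) (Fn f (xs @ z # ys))"
    by (auto intro: rstep_ac_Fn ac_eq.ac_Fn)
  then show ?case using step(3) by (simp add: rtranclp.rtrancl_into_rtrancl)
qed simp

lemma conv_ac_Fn_args:
  "length ts = length us \<Longrightarrow> \<forall>i<length ts. conv_ac A R (ts ! i) (us ! i) \<Longrightarrow>
   conv_ac A R (Fn f (xs @ ts)) (Fn f (xs @ us))"
proof (induction ts arbitrary: us xs)
  case (Cons t ts)
  then obtain u us' where us: "us = u # us'" by (cases us) auto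
  have "conv_ac A R (Fn f (xs @ t # ts)) (Fn f (xs @ u # ts))"
    using Cons.prems(2)[rule_format, of 0] us by (auto intro: conv_ac_Fn)
  moreover have "conv_ac A R (Fn f ((xs @ [u]) @ ts)) (Fn f ((xs @ [u]) @ us'))"
    using Cons.prems us by (intro Cons.IH) auto
  ultimately show ?case using us by (auto intro: conv_ac_trans)
qed (simp add: conv_ac_refl)

lemma conv_ac_subst:
  "is_eterm C \<Longrightarrow> \<forall>x\<in>vars C. conv_ac A R (\<sigma> x) (\<tau> x) \<Longrightarrow> conv_ac A R (subst \<sigma> C) (subst \<tau> C)"
proof (induction C)
  case (Fn f ts)
  have "conv_ac A R (Fn f ([] @ map (subst \<sigma>) ts)) (Fn f ([] @ map (subst \<tau>) ts))"
    using Fn by (intro conv_ac_Fn_args) auto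
  then show ?case by simp
qed auto

lemma subst_subst: "subst \<sigma> (subst \<tau> C) = subst (\<lambda>x. subst \<sigma> (\<tau> x)) C"
  by (induction C) auto

lemma vars_subst: "vars (subst \<sigma> C) = (\<Union>x\<in>vars C. vars (\<sigma> x))"
  by (induction C) auto

lemma is_eterm_subst: "is_eterm C \<Longrightarrow> \<forall>x\<in>vars C. is_eterm (\<sigma> x) \<Longrightarrow> is_eterm (subst \<sigma> C)"
  by (induction C) auto

lemma wf_trm_subst: "wf_trm ar C \<Longrightarrow> \<forall>x\<in>vars C. wf_trm ar (\<sigma> x) \<Longrightarrow> wf_trm ar (subst \<sigma> C)"
  by (induction C) auto

lemma set_holes: "set (holes t) = vars t"
  by (induction t) auto

lemma vars_ectx: "ectx T k C \<Longrightarrow> vars C = {0..<k}"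
  by (simp add: ectx_def flip: set_holes)

text \<open>(id) only accepts contexts whose holes are 0,...,k-1 from left to right;
  linearize n renumbers the hole occurrences of an E-term consecutively from n.\<close>
fun linearize :: "nat \<Rightarrow> ('n, 'f) trm \<Rightarrow> ('n, 'f) trm"
  and linearize_list :: "nat \<Rightarrow> ('n, 'f) trm list \<Rightarrow> ('n, 'f) trm list" where
  "linearize n (Var x) = Var n"
| "linearize n (Fn f ts) = Fn f (linearize_list n ts)"
| "linearize n t = t"
| "linearize_list n [] = []"
| "linearize_list n (t # ts) = linearize n t # linearize_list (n + length (holes t)) ts"

lemma length_linearize_list: "length (linearize_list n ts) = length ts"
  by (induction ts arbitrary: n) auto

lemma holes_linearize:
  fixes t :: "('n, 'f) trm" and ts :: "('n, 'f) trm list"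
  shows "is_eterm t \<Longrightarrow> holes (linearize n t) = [n..<n + length (holes t)]"
    and "\<forall>t\<in>set ts. is_eterm t \<Longrightarrow>
      concat (map holes (linearize_list n ts)) = [n..<n + length (concat (map holes ts))]"
proof (induction n t and n ts rule: linearize_linearize_list.induct)
  case (5 n t ts)
  then have "holes (linearize n t) = [n..<n + length (holes t)]"
    and "concat (map holes (linearize_list (n + length (holes t)) ts)) =
      [n + length (holes t)..<n + length (holes t) + length (concat (map holes ts))]"
    by auto
  moreover have "[n..<n + length (holes t)] @
      [n + length (holes t)..<n + length (holes t) + length (concat (map holes ts))] =
      [n..<n + length (holes t) + length (concat (map holes ts))]"
    by (rule upt_add_eq_append[symmetric]) simp
  ultimately show ?case by (simp add: add.assoc)
qed simp_all

lemma is_eterm_linearize: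
  fixes t :: "('n, 'f) trm" and ts :: "('n, 'f) trm list"
  shows "is_eterm t \<Longrightarrow> is_eterm (linearize n t)"
    and "\<forall>t\<in>set ts. is_eterm t \<Longrightarrow> \<forall>t\<in>set (linearize_list n ts). is_eterm t"
  by (induction n t and n ts rule: linearize_linearize_list.induct) simp_all

lemma wf_trm_linearize:
  fixes t :: "('n, 'f) trm" and ts :: "('n, 'f) trm list"
  shows "wf_trm ar t \<Longrightarrow> wf_trm ar (linearize n t)"
    and "\<forall>t\<in>set ts. wf_trm ar t \<Longrightarrow> \<forall>t\<in>set (linearize_list n ts). wf_trm ar t"
  by (induction n t and n ts rule: linearize_linearize_list.induct)
    (simp_all add: length_linearize_list)

lemma subst_linearize:
  fixes t :: "('n, 'f) trm" and ts :: "('n, 'f) trm list"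
  shows "is_eterm t \<Longrightarrow> (\<And>j. j < length (holes t) \<Longrightarrow> \<rho> (n + j) = \<sigma> (holes t ! j)) \<Longrightarrow>
      subst \<rho> (linearize n t) = subst \<sigma> t"
    and "\<forall>t\<in>set ts. is_eterm t \<Longrightarrow>
      (\<And>j. j < length (concat (map holes ts)) \<Longrightarrow> \<rho> (n + j) = \<sigma> (concat (map holes ts) ! j)) \<Longrightarrow>
      map (subst \<rho>) (linearize_list n ts) = map (subst \<sigma>) ts"
proof (induction n t and n ts rule: linearize_linearize_list.induct)
  case (1 n x)
  then show ?case using 1(2)[of 0] by simp
next
  case (5 n t ts)
  have "subst \<rho> (linearize n t) = subst \<sigma> t"
    using 5(3,4) by (intro 5(1)) (auto simp: nth_append)
  moreover have "map (subst \<rho>) (linearize_list (n + length (holes t)) ts) = map (subst \<sigma>) ts"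
    using 5(3) 5(4)[of "length (holes t) + _"] by (intro 5(2)) (auto simp: nth_append add.assoc)
  ultimately show ?case by simp
qed simp_all

section \<open>Aliens\<close>

fun aliens :: "('n, 'f) trm \<Rightarrow> ('n, 'f) trm set" where
  "aliens (Fn f ts) = (\<Union>t\<in>set ts. aliens t)"
| "aliens t = {t}"

lemma aliens_subterms: "a \<in> aliens t \<Longrightarrow> a \<in> subterms t"
  by (induction t rule: aliens.induct) (auto simp: subterms_refl)

lemma guarded_subterm_of_alien: "A \<in> subterms t \<Longrightarrow> guarded A \<Longrightarrow> \<exists>a\<in>aliens t. A \<in> subterms a"
  by (induction t; fastforce)

lemma aliens_subst_eterm: "is_eterm C \<Longrightarrow> aliens (subst \<sigma> C) = (\<Union>x\<in>vars C. aliens (\<sigma> x))"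
  by (induction C) auto

lemma ac_aliens:
  "ac_eq A s t \<Longrightarrow>
   (\<forall>a\<in>aliens s. \<exists>b\<in>aliens t. ac_eq A a b) \<and> (\<forall>b\<in>aliens t. \<exists>a\<in>aliens s. ac_eq A b a)"
proof (induction rule: ac_eq.induct)
  case (ac_trans s t u) then show ?case by (meson ac_eq.ac_trans)
qed (auto intro: ac_eq.intros)

lemma rstep_ac_of_alien: "a \<in> aliens s \<Longrightarrow> rstep_ac A R a u \<Longrightarrow> \<exists>v. rstep_ac A R s v"
proof (induction s arbitrary: a)
  case (Fn f ts)
  then obtain t where t: "t \<in> set ts" "a \<in> aliens t" by auto
  with Fn obtain v where "rstep_ac A R t v" by blast
  moreover obtain xs ys where "ts = xs @ t # ys" using t(1) by (meson split_list)
  ultimately show ?case using rstep_ac_Fn by metis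
qed auto

lemma nf_ac:
  "ac_eq A a b \<Longrightarrow> \<not> (\<exists>u. rstep_ac A R b u) \<Longrightarrow> \<not> (\<exists>u. rstep_ac A R a u)"
  unfolding rstep_ac_def by (meson ac_eq.ac_sym ac_eq.ac_trans)

text \<open>A rule between E-terms, applied where all aliens are irreducible, can only match
  inside the E-context prefix, so it merely copies or erases aliens.\<close>
lemma aliens_rstep:
  assumes "rstep R s t"
    and "\<forall>(l, r)\<in>R. is_eterm l \<and> is_eterm r \<and> vars r \<subseteq> vars l"
    and "\<forall>a\<in>aliens s. \<not> (\<exists>u. rstep_ac A R a u)"
  shows "aliens t \<subseteq> aliens s"
  using assms
proof (induction rule: rstep.induct)
  case (rs_root l r \<sigma>)
  then have "is_eterm l" "is_eterm r" "vars r \<subseteq> vars l" by auto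
  then show ?case by (auto simp: aliens_subst_eterm)
next
  case (rs_Fn s t f xs ys)
  then show ?case by auto
qed (simp add: rstep_ac_def; metis ac_eq.ac_refl rstep.intros)+

lemma aliens_rsteps_ac:
  assumes rules: "\<forall>(l, r)\<in>R. is_eterm l \<and> is_eterm r \<and> vars r \<subseteq> vars l"
    and G_nf: "\<forall>b\<in>G. \<not> (\<exists>u. rstep_ac A R b u)"
    and steps: "(rstep_ac A R)\<^sup>*\<^sup>* s t"
    and s: "\<forall>a\<in>aliens s. \<exists>b\<in>G. ac_eq A a b"
  shows "\<forall>a\<in>aliens t. \<exists>b\<in>G. ac_eq A a b"
  using steps
proof (induction rule: rtranclp_induct)
  case (step y z)
  then obtain y' z' where y': "ac_eq A y y'" "rstep R y' z'" "ac_eq A z' z"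
    unfolding rstep_ac_def by blast
  have y'_G: "\<forall>a\<in>aliens y'. \<exists>b\<in>G. ac_eq A a b"
    using ac_aliens[OF y'(1)] step.IH by (meson ac_eq.ac_trans)
  then have "\<forall>a\<in>aliens y'. \<not> (\<exists>u. rstep_ac A R a u)"
    using G_nf nf_ac by metis
  then have "aliens z' \<subseteq> aliens y'"
    using aliens_rstep[OF y'(2) rules] by blast
  then show ?case
    using ac_aliens[OF y'(3)] y'_G by (meson ac_eq.ac_trans subsetD)
qed (rule s)

section \<open>Replaying cut-free derivations\<close>

definition id_derivable :: "('n, 'f) eqthy \<Rightarrow> ('n, 'f) trm set \<Rightarrow> ('n, 'f) trm \<Rightarrow> bool" where
  "id_derivable T \<Gamma> M \<longleftrightarrow>
    (\<exists>C \<sigma>. is_eterm C \<and> wf_trm (arity T) C \<and> (\<forall>x\<in>vars C. \<sigma> x \<in> \<Gamma>) \<and> eqE T M (subst \<sigma> C))"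

lemma id_derivable_mem: "D \<in> \<Gamma> \<Longrightarrow> id_derivable T \<Gamma> D"
  unfolding id_derivable_def eqE_def
  by (rule exI[of _ "Var 0"], rule exI[of _ "\<lambda>_. D"]) (simp add: conv_ac_refl)

lemma id_derivable_ac: "acE T D D' \<Longrightarrow> id_derivable T \<Gamma> D' \<Longrightarrow> id_derivable T \<Gamma> D"
  unfolding id_derivable_def eqE_def acE_def by (meson conv_ac_of_ac conv_ac_trans)

lemma id_derivable_mono: "\<Gamma> \<subseteq> \<Gamma>' \<Longrightarrow> id_derivable T \<Gamma> M \<Longrightarrow> id_derivable T \<Gamma>' M"
  unfolding id_derivable_def by blast

lemma id_derivable_compose:
  assumes C: "is_eterm C" "wf_trm (arity T) C" and M: "eqE T M (subst \<sigma> C)"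
    and holes: "\<forall>x\<in>vars C. id_derivable T \<Gamma> (\<sigma> x)"
  shows "id_derivable T \<Gamma> M"
proof -
  have "\<forall>x\<in>vars C. \<exists>p. is_eterm (fst p) \<and> wf_trm (arity T) (fst p) \<and>
      (\<forall>y\<in>vars (fst p). snd p y \<in> \<Gamma>) \<and> eqE T (\<sigma> x) (subst (snd p) (fst p))"
    using holes unfolding id_derivable_def by fastforce
  then obtain P where P: "\<forall>x\<in>vars C. is_eterm (fst (P x)) \<and> wf_trm (arity T) (fst (P x)) \<and>
      (\<forall>y\<in>vars (fst (P x)). snd (P x) y \<in> \<Gamma>) \<and> eqE T (\<sigma> x) (subst (snd (P x)) (fst (P x)))"
    using bchoice by metis
  define D where "D x = fst (P x)" for x
  define \<tau> where "\<tau> x = snd (P x)" for x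
  have D: "\<forall>x\<in>vars C. is_eterm (D x) \<and> wf_trm (arity T) (D x) \<and>
      (\<forall>y\<in>vars (D x). \<tau> x y \<in> \<Gamma>) \<and> eqE T (\<sigma> x) (subst (\<tau> x) (D x))"
    using P unfolding D_def \<tau>_def .
  \<comment> \<open>the contexts D x are made variable-disjoint by pairing each variable with x\<close>
  define D' where "D' x = subst (\<lambda>y. Var (prod_encode (x, y))) (D x)" for x
  define \<rho> where "\<rho> n = (case prod_decode n of (x, y) \<Rightarrow> \<tau> x y)" for n
  have "subst \<rho> (subst D' C) = subst (\<lambda>x. subst (\<tau> x) (D x)) C"
    by (simp add: subst_subst D'_def \<rho>_def prod_encode_inverse)
  moreover have "eqE T (subst \<sigma> C) (subst (\<lambda>x. subst (\<tau> x) (D x)) C)"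
    using D C unfolding eqE_def by (intro conv_ac_subst) auto
  ultimately have "eqE T M (subst \<rho> (subst D' C))"
    using M unfolding eqE_def by (metis conv_ac_trans)
  moreover have "is_eterm (subst D' C)" "wf_trm (arity T) (subst D' C)"
    using C D by (auto simp: D'_def intro!: is_eterm_subst wf_trm_subst)
  moreover have "\<forall>z\<in>vars (subst D' C). \<rho> z \<in> \<Gamma>"
    using D by (auto simp: vars_subst D'_def \<rho>_def prod_encode_inverse)
  ultimately show ?thesis
    unfolding id_derivable_def by blast
qed

lemma cfree_id_derivable:
  assumes ns: "nseq T \<Gamma> M" and "id_derivable T \<Gamma> M"
  shows "cfree T \<Gamma> M"
proof -
  obtain C \<sigma> where C: "is_eterm C" "wf_trm (arity T) C" "\<forall>x\<in>vars C. \<sigma> x \<in> \<Gamma>"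
      and M: "eqE T M (subst \<sigma> C)"
    using assms(2) unfolding id_derivable_def by blast
  define k where "k = length (holes C)"
  have "ectx T k (linearize 0 C)"
    using C holes_linearize(1) is_eterm_linearize(1) wf_trm_linearize(1)
    unfolding ectx_def k_def by fastforce
  moreover have "plug (linearize 0 C) (map \<sigma> (holes C)) = subst \<sigma> C"
    unfolding plug_def using C(1) by (intro subst_linearize(1)) auto
  moreover have "set (map \<sigma> (holes C)) \<subseteq> \<Gamma>"
    using C(3) by (auto simp: set_holes)
  ultimately show ?thesis
    using cfree.r_id[OF ns, of k _ "map \<sigma> (holes C)"] M by (simp add: k_def)
qed

definition available :: "('n, 'f) eqthy \<Rightarrow> ('n, 'f) trm set \<Rightarrow> ('n, 'f) trm \<Rightarrow> bool" where
  "available T \<Gamma> D \<longleftrightarrow> id_derivable T \<Gamma> D \<and>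
    (\<forall>A\<in>subterms D. guarded A \<longrightarrow> (\<exists>b\<in>\<Gamma>. \<exists>B\<in>subterms b. acE T A B))"

lemma available_mono: "\<Gamma> \<subseteq> \<Gamma>' \<Longrightarrow> available T \<Gamma> D \<Longrightarrow> available T \<Gamma>' D"
  unfolding available_def using id_derivable_mono by blast

lemma available_ac_mem:
  assumes "acE T D D'" "D' \<in> \<Gamma>"
  shows "available T \<Gamma> D"
proof -
  have "\<exists>B\<in>subterms D'. acE T A B" if "A \<in> subterms D" "guarded A" for A
    using assms(1) that ac_guarded_subterm unfolding acE_def by blast
  then show ?thesis
    using assms id_derivable_ac id_derivable_mem unfolding available_def by blast
qed

lemma nterm_ac:
  assumes E: "E_ok T" and ab: "acE T a b" and a: "nterm T a"
  shows "nterm T b"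
proof -
  have ac: "ac_eq (ACs T) a b" and "\<forall>f\<in>ACs T. arity T f = 2"
    using ab E unfolding acE_def E_ok_def by auto
  then have "wf_trm (arity T) b"
    using a ac_wf_trm unfolding nterm_def by blast
  moreover have "ground b" "is_nf T b"
    using a ac_vars[OF ac] nf_ac[OF ac_eq.ac_sym[OF ac]] unfolding nterm_def ground_def is_nf_def
    by auto
  ultimately show ?thesis unfolding nterm_def by blast
qed

lemma cfree_nseq: "cfree T \<Gamma> M \<Longrightarrow> nseq T \<Gamma> M"
  by (induction rule: cfree.induct) auto

lemma nterm_of_cfree: "cfree T \<Gamma> M \<Longrightarrow> nterm T M"
  using cfree_nseq unfolding nseq_def by blast

text \<open>An available guarded hypothesis may be assumed up to AC: (gs) introduces its
  AC-variant occurring in \<Gamma>, whose left premise holds by (id).\<close>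
lemma cfree_assume_available:
  assumes E: "E_ok T" and D: "available T \<Gamma> D" "guarded D" "nterm T D"
    and ns: "nseq T \<Gamma> M"
    and step: "\<And>B. acE T D B \<Longrightarrow> nterm T B \<Longrightarrow> cfree T (insert B \<Gamma>) M"
  shows "cfree T \<Gamma> M"
proof -
  obtain b B where B: "b \<in> \<Gamma>" "B \<in> subterms b" "acE T D B"
    using D subterms_refl unfolding available_def by metis
  have "guarded B" using B(3) D(2) ac_guarded unfolding acE_def by metis
  moreover have "nterm T B" using nterm_ac[OF E B(3) D(3)] .
  moreover have "id_derivable T \<Gamma> B"
    using D(1) B(3) id_derivable_ac acE_sym unfolding available_def by metis
  ultimately have "cfree T \<Gamma> B"
    using ns by (intro cfree_id_derivable) (auto simp: nseq_def)
  then show ?thesis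
    using ns \<open>guarded B\<close> B \<open>nterm T B\<close> step by (intro cfree.r_gs[of T \<Gamma> M B]) auto
qed

definition replayable :: "('n, 'f) eqthy \<Rightarrow> ('n, 'f) trm set \<Rightarrow> ('n, 'f) trm \<Rightarrow> bool" where
  "replayable T \<Delta> M \<longleftrightarrow>
    (\<forall>\<Gamma> M'. (\<forall>D\<in>\<Delta>. available T \<Gamma> D) \<longrightarrow> acE T M M' \<longrightarrow> nseq T \<Gamma> M' \<longrightarrow> cfree T \<Gamma> M')"

lemma replayableI:
  "(\<And>\<Gamma> M'. \<forall>D\<in>\<Delta>. available T \<Gamma> D \<Longrightarrow> acE T M M' \<Longrightarrow> nseq T \<Gamma> M' \<Longrightarrow> cfree T \<Gamma> M') \<Longrightarrow>
   replayable T \<Delta> M"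
  unfolding replayable_def by blast

lemma replayableD:
  "replayable T \<Delta> M \<Longrightarrow> \<forall>D\<in>\<Delta>. available T \<Gamma> D \<Longrightarrow> acE T M M' \<Longrightarrow> nseq T \<Gamma> M' \<Longrightarrow>
   cfree T \<Gamma> M'"
  unfolding replayable_def by blast

lemma replayable_extend:
  assumes "replayable T (\<Delta> \<union> \<Delta>') N" "\<forall>D\<in>\<Delta>. available T \<Gamma> D" "\<Gamma> \<subseteq> \<Gamma>'"
    and "\<forall>D\<in>\<Delta>'. \<exists>D'\<in>\<Gamma>'. acE T D D'" "acE T N N'" "nseq T \<Gamma>' N'"
  shows "cfree T \<Gamma>' N'"
  using assms by (intro replayableD[OF assms(1)]) (auto intro: available_ac_mem available_mono)

lemma replayable_id:
  assumes C: "ectx T k C" and Ms: "length Ms = k" "set Ms \<subseteq> \<Delta>" and M: "eqE T M (plug C Ms)"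
  shows "replayable T \<Delta> M"
proof (rule replayableI)
  fix \<Gamma> M' assume av: "\<forall>D\<in>\<Delta>. available T \<Gamma> D" and "acE T M M'" and "nseq T \<Gamma> M'"
  have "id_derivable T \<Gamma> M"
  proof (rule id_derivable_compose)
    show "is_eterm C" "wf_trm (arity T) C"
      using C by (auto simp: ectx_def)
    show "eqE T M (subst (\<lambda>i. Ms ! i) C)"
      using M by (simp add: plug_def)
    have "vars C = {0..<k}"
      using C by (rule vars_ectx)
    then show "\<forall>x\<in>vars C. id_derivable T \<Gamma> (Ms ! x)"
      using Ms av nth_mem by (fastforce simp: available_def)
  qed
  then show "cfree T \<Gamma> M'"
    using \<open>acE T M M'\<close> \<open>nseq T \<Gamma> M'\<close> id_derivable_ac acE_sym cfree_id_derivable by metis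
qed

lemma replayable_constructor:
  assumes E: "E_ok T"
    and inv: "\<And>a b t. acE T (c a b) t \<Longrightarrow> \<exists>a' b'. t = c a' b' \<and> acE T a a' \<and> acE T b b'"
    and rule: "\<And>\<Gamma> a b. nseq T \<Gamma> (c a b) \<Longrightarrow> cfree T \<Gamma> a \<Longrightarrow> cfree T \<Gamma> b \<Longrightarrow> cfree T \<Gamma> (c a b)"
    and M: "nterm T M" "replayable T \<Delta> M" and K: "nterm T K" "replayable T \<Delta> K"
  shows "replayable T \<Delta> (c M K)"
proof (rule replayableI)
  fix \<Gamma> U assume av: "\<forall>D\<in>\<Delta>. available T \<Gamma> D" and "acE T (c M K) U" and ns: "nseq T \<Gamma> U"
  then obtain M' K' where U: "U = c M' K'" "acE T M M'" "acE T K K'"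
    using inv by blast
  have "nseq T \<Gamma> M'" "nseq T \<Gamma> K'"
    using ns U M(1) K(1) nterm_ac[OF E] by (auto simp: nseq_def)
  then show "cfree T \<Gamma> U"
    using U ns av M(2) K(2) by (auto intro!: rule dest: replayableD)
qed

lemma replayable_Pair_left:
  assumes E: "E_ok T" and nt: "nterm T (Pair M N)" "nterm T M" "nterm T N"
    and U: "replayable T (insert (Pair M N) \<Delta> \<union> {M, N}) U"
  shows "replayable T (insert (Pair M N) \<Delta>) U"
proof (rule replayableI)
  fix \<Gamma> U' assume av: "\<forall>D\<in>insert (Pair M N) \<Delta>. available T \<Gamma> D"
    and "acE T U U'" and ns: "nseq T \<Gamma> U'"
  show "cfree T \<Gamma> U'"
  proof (rule cfree_assume_available[OF E _ _ nt(1) ns])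
    fix B assume "acE T (Pair M N) B" "nterm T B"
    then obtain M' N' where B: "B = Pair M' N'" "acE T M M'" "acE T N N'"
      using acE_PairD by blast
    have "cfree T (insert B \<Gamma> \<union> {M', N'}) U'"
      by (rule replayable_extend[OF U av])
        (use B ns nt \<open>nterm T B\<close> \<open>acE T U U'\<close> nterm_ac[OF E] in \<open>auto simp: nseq_def\<close>)
    then show "cfree T (insert B \<Gamma>) U'"
      using B ns \<open>nterm T B\<close> by (auto intro!: cfree.r_pL simp: nseq_def)
  qed (use av in auto)
qed

lemma replayable_key_left:
  assumes E: "E_ok T"
    and inv: "\<And>a b t. acE T (c a b) t \<Longrightarrow> \<exists>a' b'. t = c a' b' \<and> acE T a a' \<and> acE T b b'"
    and rule: "\<And>\<Gamma> a b N. nseq T (insert (c a b) \<Gamma>) N \<Longrightarrow> cfree T (insert (c a b) \<Gamma>) b \<Longrightarrow>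
      cfree T (insert (c a b) \<Gamma> \<union> {a, b}) N \<Longrightarrow> cfree T (insert (c a b) \<Gamma>) N"
    and g: "guarded (c M K)" and nt: "nterm T (c M K)" "nterm T M" "nterm T K"
    and key: "replayable T (insert (c M K) \<Delta>) K"
    and N: "replayable T (insert (c M K) \<Delta> \<union> {M, K}) N"
  shows "replayable T (insert (c M K) \<Delta>) N"
proof (rule replayableI)
  fix \<Gamma> N' assume av: "\<forall>D\<in>insert (c M K) \<Delta>. available T \<Gamma> D"
    and "acE T N N'" and ns: "nseq T \<Gamma> N'"
  show "cfree T \<Gamma> N'"
  proof (rule cfree_assume_available[OF E _ g nt(1) ns])
    fix B assume "acE T (c M K) B" "nterm T B"
    then obtain M' K' where B: "B = c M' K'" "acE T M M'" "acE T K K'"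
      using inv by blast
    have nt': "nterm T M'" "nterm T K'"
      using B nt nterm_ac[OF E] by auto
    have "cfree T (insert B \<Gamma>) K'"
      using av ns nt' \<open>nterm T B\<close> \<open>acE T K K'\<close>
      by (intro replayableD[OF key]) (auto elim: available_mono[rotated] simp: nseq_def)
    moreover have "cfree T (insert B \<Gamma> \<union> {M', K'}) N'"
      by (rule replayable_extend[OF N av])
        (use B ns nt' \<open>nterm T B\<close> \<open>acE T N N'\<close> in \<open>auto simp: nseq_def\<close>)
    ultimately show "cfree T (insert B \<Gamma>) N'"
      using B ns \<open>nterm T B\<close> by (auto intro!: rule simp: nseq_def)
  qed (use av in auto)
qed

lemma replayable_unblind_left:
  assumes E: "E_ok T"
    and nt: "nterm T (Sign (Blind M R) K)" "nterm T (Sign M K)" "nterm T R"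
    and key: "replayable T (insert (Sign (Blind M R) K) \<Delta>) R"
    and N: "replayable T (insert (Sign (Blind M R) K) \<Delta> \<union> {Sign M K, R}) N"
  shows "replayable T (insert (Sign (Blind M R) K) \<Delta>) N"
proof (rule replayableI)
  fix \<Gamma> N' assume av: "\<forall>D\<in>insert (Sign (Blind M R) K) \<Delta>. available T \<Gamma> D"
    and "acE T N N'" and ns: "nseq T \<Gamma> N'"
  show "cfree T \<Gamma> N'"
  proof (rule cfree_assume_available[OF E _ _ nt(1) ns])
    fix B assume "acE T (Sign (Blind M R) K) B" "nterm T B"
    then obtain M' R' K' where B: "B = Sign (Blind M' R') K'"
        "acE T M M'" "acE T R R'" "acE T K K'"
      using acE_SignD acE_BlindD by metis
    have MK: "acE T (Sign M K) (Sign M' K')"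
      using B(2,4) unfolding acE_def by (meson ac_eq.ac_Sign1 ac_eq.ac_Sign2 ac_eq.ac_trans)
    then have nt': "nterm T (Sign M' K')" "nterm T R'"
      using B nt nterm_ac[OF E] by auto
    have "cfree T (insert B \<Gamma>) R'"
      using av ns nt' \<open>nterm T B\<close> \<open>acE T R R'\<close>
      by (intro replayableD[OF key]) (auto elim: available_mono[rotated] simp: nseq_def)
    moreover have "cfree T (insert B \<Gamma> \<union> {Sign M' K', R'}) N'"
      by (rule replayable_extend[OF N av])
        (use B MK ns nt' \<open>nterm T B\<close> \<open>acE T N N'\<close> in \<open>auto simp: nseq_def\<close>)
    ultimately show "cfree T (insert B \<Gamma>) N'"
      using B ns \<open>nterm T B\<close> by (auto intro!: cfree.r_blindL2 simp: nseq_def)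
  qed (use av in auto)
qed

lemma replayable_verify_left:
  assumes E: "E_ok T" and KL: "acE T K L"
    and nt: "nterm T (Sign M K)" "nterm T (Pub L)" "nterm T M"
    and N: "replayable T (\<Delta> \<union> {Sign M K, Pub L, M}) N"
  shows "replayable T (\<Delta> \<union> {Sign M K, Pub L}) N"
proof (rule replayableI)
  fix \<Gamma> N' assume av: "\<forall>D\<in>\<Delta> \<union> {Sign M K, Pub L}. available T \<Gamma> D"
    and "acE T N N'" and ns: "nseq T \<Gamma> N'"
  show "cfree T \<Gamma> N'"
  proof (rule cfree_assume_available[OF E _ _ nt(1) ns])
    fix S assume "acE T (Sign M K) S" "nterm T S"
    then obtain M' K' where S: "S = Sign M' K'" "acE T M M'" "acE T K K'"
      using acE_SignD by blast
    have ns_S: "nseq T (insert S \<Gamma>) N'"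
      using ns \<open>nterm T S\<close> by (auto simp: nseq_def)
    show "cfree T (insert S \<Gamma>) N'"
    proof (rule cfree_assume_available[OF E _ _ nt(2) ns_S])
      fix P assume "acE T (Pub L) P" "nterm T P"
      then obtain L' where P: "P = Pub L'" "acE T L L'"
        using acE_PubD by blast
      have "cfree T (\<Gamma> \<union> {Sign M' K', Pub L', M'}) N'"
        using av
        by (intro replayable_extend[OF N, of \<Gamma>])
          (use S P ns_S nt \<open>nterm T P\<close> \<open>acE T N N'\<close> \<open>acE T (Sign M K) S\<close> \<open>acE T (Pub L) P\<close>
            nterm_ac[OF E] in \<open>auto simp: nseq_def\<close>)
      moreover have "acE T K' L'"
        using KL S P by (meson acE_sym acE_trans)
      moreover have "nseq T (\<Gamma> \<union> {Sign M' K', Pub L'}) N'"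
        using ns_S S P \<open>nterm T P\<close> by (auto simp: nseq_def)
      ultimately have "cfree T (\<Gamma> \<union> {Sign M' K', Pub L'}) N'"
        by (blast intro: cfree.r_signL)
      then show "cfree T (insert P (insert S \<Gamma>)) N'"
        using S P by (simp add: insert_commute)
    qed (use av in \<open>auto elim: available_mono[rotated]\<close>)
  qed (use av in auto)
qed

lemma replayable_guarded_subterm:
  assumes E: "E_ok T" and A: "guarded A" "A \<in> (\<Union>N\<in>insert M \<Delta>. subterms N)" "nterm T A"
    and A_rep: "replayable T \<Delta> A" and M: "replayable T (insert A \<Delta>) M"
  shows "replayable T \<Delta> M"
proof (rule replayableI)
  fix \<Gamma> M' assume av: "\<forall>D\<in>\<Delta>. available T \<Gamma> D" and MM': "acE T M M'" and ns: "nseq T \<Gamma> M'"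
  have "\<exists>A'\<in>(\<Union>N\<in>insert M' \<Gamma>. subterms N). acE T A A'"
  proof -
    from A(2) consider "A \<in> subterms M" | D where "D \<in> \<Delta>" "A \<in> subterms D"
      by blast
    then show ?thesis
    proof cases
      case 1
      then show ?thesis
        using ac_guarded_subterm[of "ACs T" M M' A] MM' A(1) unfolding acE_def by blast
    next
      case 2
      then show ?thesis
        using av A(1) unfolding available_def by blast
    qed
  qed
  then obtain A' where A': "A' \<in> (\<Union>N\<in>insert M' \<Gamma>. subterms N)" "acE T A A'" ..
  have "guarded A'"
    using ac_guarded A(1) A'(2) unfolding acE_def by metis
  have nt': "nterm T A'"
    using nterm_ac[OF E A'(2) A(3)] .
  have "cfree T \<Gamma> A'"
    using replayableD[OF A_rep av A'(2)] ns nt' by (simp add: nseq_def)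
  moreover have "cfree T (insert A' \<Gamma>) M'"
  proof (rule replayableD[OF M _ MM'])
    show "\<forall>D\<in>insert A \<Delta>. available T (insert A' \<Gamma>) D"
      using av A'(2) by (auto intro: available_ac_mem elim: available_mono[rotated])
    show "nseq T (insert A' \<Gamma>) M'"
      using ns nt' by (simp add: nseq_def)
  qed
  ultimately show "cfree T \<Gamma> M'"
    by (rule cfree.r_gs[OF ns \<open>guarded A'\<close> A'(1)])
qed

lemma cfree_replayable:
  assumes E: "E_ok T"
  shows "cfree T \<Delta> M \<Longrightarrow> replayable T \<Delta> M"
proof (induction rule: cfree.induct)
  case (r_id \<Delta> M k C Ms)
  show ?case by (rule replayable_id[OF r_id.hyps(2-5)])
next
  case (r_pL M N \<Delta> U)
  show ?case
    by (rule replayable_Pair_left[OF E _ _ _ r_pL.IH])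
      (use cfree_nseq[OF r_pL.hyps(2)] in \<open>auto simp: nseq_def\<close>)
next
  case (r_pR \<Delta> M N)
  show ?case
    using replayable_constructor[where c = Pair, OF E acE_PairD cfree.r_pR
        nterm_of_cfree[OF r_pR.hyps(2)] r_pR.IH(1) nterm_of_cfree[OF r_pR.hyps(3)] r_pR.IH(2)] .
next
  case (r_eL M K \<Delta> N)
  show ?case
    by (rule replayable_key_left[where c = Enc, OF E acE_EncD cfree.r_eL _ _ _ _ r_eL.IH])
      (use cfree_nseq[OF r_eL.hyps(3)] in \<open>auto simp: nseq_def\<close>)
next
  case (r_eR \<Delta> M K)
  show ?case
    using replayable_constructor[where c = Enc, OF E acE_EncD cfree.r_eR
        nterm_of_cfree[OF r_eR.hyps(2)] r_eR.IH(1) nterm_of_cfree[OF r_eR.hyps(3)] r_eR.IH(2)] .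
next
  case (r_signL \<Delta> M K L N)
  show ?case
    by (rule replayable_verify_left[OF E r_signL.hyps(2) _ _ _ r_signL.IH])
      (use cfree_nseq[OF r_signL.hyps(3)] in \<open>auto simp: nseq_def\<close>)
next
  case (r_signR \<Delta> M K)
  show ?case
    using replayable_constructor[where c = Sign, OF E acE_SignD cfree.r_signR
        nterm_of_cfree[OF r_signR.hyps(2)] r_signR.IH(1) nterm_of_cfree[OF r_signR.hyps(3)] r_signR.IH(2)] .
next
  case (r_blindL1 M K \<Delta> N)
  show ?case
    by (rule replayable_key_left[where c = Blind, OF E acE_BlindD cfree.r_blindL1 _ _ _ _ r_blindL1.IH])
      (use cfree_nseq[OF r_blindL1.hyps(3)] in \<open>auto simp: nseq_def\<close>)
next
  case (r_blindR \<Delta> M K)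
  show ?case
    using replayable_constructor[where c = Blind, OF E acE_BlindD cfree.r_blindR
        nterm_of_cfree[OF r_blindR.hyps(2)] r_blindR.IH(1) nterm_of_cfree[OF r_blindR.hyps(3)] r_blindR.IH(2)] .
next
  case (r_blindL2 M R K \<Delta> N)
  show ?case
    by (rule replayable_unblind_left[OF E _ _ _ r_blindL2.IH])
      (use cfree_nseq[OF r_blindL2.hyps(3)] in \<open>auto simp: nseq_def\<close>)
next
  case (r_gs \<Delta> M A)
  show ?case
    by (rule replayable_guarded_subterm[OF E r_gs.hyps(2,3) nterm_of_cfree[OF r_gs.hyps(4)] r_gs.IH])
qed

lemma cfree_replay:
  "E_ok T \<Longrightarrow> cfree T \<Delta> M \<Longrightarrow> \<forall>D\<in>\<Delta>. available T \<Gamma> D \<Longrightarrow> nseq T \<Gamma> M \<Longrightarrow> cfree T \<Gamma> M"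
  using cfree_replayable replayableD acE_refl by metis

section \<open>Normal forms of E-contexts\<close>

lemma guarded_subterm_nf_plug:
  assumes E: "E_ok T" and Ms: "length Ms = k" "\<forall>Mi\<in>set Ms. nterm T Mi"
    and C: "ectx T k C" and N: "is_nf_of T (plug C Ms) N"
    and A: "A \<in> subterms N" "guarded A"
  shows "\<exists>Mi\<in>set Ms. \<exists>B\<in>subterms Mi. acE T A B"
proof -
  define G where "G = (\<Union>Mi\<in>set Ms. aliens Mi)"
  have "\<forall>(l, r)\<in>rules T. is_eterm l \<and> is_eterm r \<and> vars r \<subseteq> vars l"
    using E unfolding E_ok_def by fast
  moreover have "\<forall>b\<in>G. \<not> (\<exists>u. rstep_ac (ACs T) (rules T) b u)"
    using Ms(2) rstep_ac_of_alien unfolding G_def nterm_def is_nf_def by blast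
  moreover have "(rstep_ac (ACs T) (rules T))\<^sup>*\<^sup>* (plug C Ms) N"
    using N by (simp add: is_nf_of_def)
  moreover have "vars C = {0..<k}"
    using C by (rule vars_ectx)
  then have "\<forall>a\<in>aliens (plug C Ms). \<exists>b\<in>G. ac_eq (ACs T) a b"
    using C Ms(1) aliens_subst_eterm[of C] nth_mem unfolding G_def plug_def ectx_def
    by (fastforce intro: ac_eq.ac_refl)
  ultimately have N_G: "\<forall>a\<in>aliens N. \<exists>b\<in>G. ac_eq (ACs T) a b"
    by (rule aliens_rsteps_ac)
  obtain a where a: "a \<in> aliens N" "A \<in> subterms a"
    using guarded_subterm_of_alien A by blast
  then obtain b Mi where b: "Mi \<in> set Ms" "b \<in> aliens Mi" "ac_eq (ACs T) a b"
    using N_G unfolding G_def by blast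
  then obtain B where "B \<in> subterms b" "ac_eq (ACs T) A B"
    using ac_guarded_subterm a(2) A(2) by blast
  then show ?thesis
    using b aliens_subterms subterms_trans unfolding acE_def by blast
qed

lemma available_nf_plug:
  assumes E: "E_ok T" and Ms: "length Ms = k" "\<forall>Mi\<in>set Ms. nterm T Mi"
    and C: "ectx T k C" and N: "is_nf_of T (plug C Ms) N"
  shows "available T (set Ms) N"
  unfolding available_def
proof
  have "eqE T N (subst (\<lambda>i. Ms ! i) C)"
    using N conv_ac_sym conv_ac_of_rsteps by (metis eqE_def is_nf_of_def plug_def)
  moreover have "vars C = {0..<k}"
    using C by (rule vars_ectx)
  ultimately show "id_derivable T (set Ms) N"
    using C Ms(1) by (intro id_derivable_compose) (auto simp: ectx_def intro: id_derivable_mem)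
  show "\<forall>A\<in>subterms N. guarded A \<longrightarrow> (\<exists>b\<in>set Ms. \<exists>B\<in>subterms b. acE T A B)"
    using guarded_subterm_nf_plug[OF assms] by blast
qed

theorem lemma4:
  fixes T :: "('n, 'f) eqthy"
  assumes "E_ok T"
    and "length Ms = k"
    and "\<forall>Mi \<in> set Ms. nterm T Mi"
    and "ectx T k C"
    and "is_nf_of T (plug C Ms) N"
    and "cfree T (insert N \<Gamma>) M"
  shows "cfree T (\<Gamma> \<union> set Ms) M"
proof (rule cfree_replay[OF assms(1,6)])
  have "available T (\<Gamma> \<union> set Ms) N"
    using available_nf_plug[OF assms(1-5)] by (rule available_mono[rotated]) simp
  then show "\<forall>D\<in>insert N \<Gamma>. available T (\<Gamma> \<union> set Ms) D"
    by (auto intro: available_ac_mem acE_refl)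
  show "nseq T (\<Gamma> \<union> set Ms) M"
    using cfree_nseq[OF assms(6)] assms(3) by (auto simp: nseq_def)
qed

end
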